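(* Let $\mathbf{x}=(x_n)$ be a summable nonincreasing sequence of positive reals such that $\mathcal{A}(\mathbf{x})$ is neither a Cantor set nor a finite set, and suppose $x_k=x_{k+1}$ for some $k\in\mathbb{N}$. Then there is $x\in\mathcal{A}(\mathbf{x})$ with $f_{\mathbf{x}}(x)\ge 4$ (where the infinite values $\omega,\mathfrak{c}$ count as $\ge 4$).
   Context: For a summable sequence $\mathbf{x}=(x_n)$ of positive reals, the achievement set is $\mathcal{A}(\mathbf{x})=\{\sum_{n\in A}x_n : A\subseteq\mathbb{N}\}$, and the cardinal function $f_{\mathbf{x}}:\mathcal{A}(\mathbf{x})\to\{1,2,3,\dots\}\cup\{\omega,\mathfrak{c}\}$ sends $x$ to the cardinality of the set of $(\varepsilon_n)\in\{0,1\}^{\mathbb{N}}$ with $\sum\varepsilon_n x_n=x$. *)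

theory Defs
  imports "HOL-Analysis.Analysis"
begin

definition subsum :: "(nat \<Rightarrow> real) \<Rightarrow> nat set \<Rightarrow> real" where
  "subsum x A = (\<Sum>n. if n \<in> A then x n else 0)"

definition achievement_set :: "(nat \<Rightarrow> real) \<Rightarrow> real set" where
  "achievement_set x = {subsum x A | A. True}"

definition representations :: "(nat \<Rightarrow> real) \<Rightarrow> real \<Rightarrow> (nat \<Rightarrow> bool) set" where
  "representations x t = {\<epsilon>. (\<Sum>n. (if \<epsilon> n then 1 else 0) * x n) = t}"

definition cantor_set :: "real set \<Rightarrow> bool" where
  "cantor_set C \<longleftrightarrow> C \<noteq> {} \<and> compact C \<and> (\<forall>y\<in>C. y islimpt C)
     \<and> interior (closure C) = {}"

end

theory Submission
  imports Defs
begin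

(* Let x k = x (Suc k) = d and let z be x with these two terms replaced by 0, so that the
   achievement set of x is covered by the three closed sets A(z), d + A(z) and 2d + A(z).
   A(x) is compact and perfect; not being a Cantor set, it has interior, hence so does A(z).
   But if every point of A(z) had a unique representation supported where z is nonzero, then
   for N large the sets of subsums with a prescribed pattern below N would cut A(z) into
   finitely many disjoint closed pieces, each shorter than a given interval inside A(z),
   which contradicts the connectedness of that interval. Two distinct representations of one
   point of A(z), each completed by the k-th or by the (k+1)-st term, represent one point of
   A(x) in four ways. *)

definition subseries_sum :: "(nat \<Rightarrow> real) \<Rightarrow> (nat \<Rightarrow> bool) \<Rightarrow> real" where
  "subseries_sum x \<epsilon> = (\<Sum>n. (if \<epsilon> n then 1 else 0) * x n)"

lemma representations_eq: "representations x t = {\<epsilon>. subseries_sum x \<epsilon> = t}"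
  by (simp add: representations_def subseries_sum_def)

lemma achievement_set_eq_range: "achievement_set x = range (subseries_sum x)"
proof -
  have selection: "subseries_sum x \<epsilon> = subsum x {n. \<epsilon> n}" for \<epsilon>
    unfolding subsum_def subseries_sum_def by (rule arg_cong[where f = suminf]) auto
  have index_set: "subsum x A = subseries_sum x (\<lambda>n. n \<in> A)" for A
    unfolding subsum_def subseries_sum_def by (rule arg_cong[where f = suminf]) auto
  show ?thesis
    unfolding achievement_set_def using selection index_set by blast
qed

lemma subseries_sum_cong:
  assumes "\<And>n. x n \<noteq> 0 \<Longrightarrow> \<epsilon> n = \<delta> n"
  shows "subseries_sum x \<epsilon> = subseries_sum x \<delta>"
  unfolding subseries_sum_def using assms by (intro arg_cong[where f = suminf]) (auto simp: fun_eq_iff)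

lemma summable_subseries:
  fixes x :: "nat \<Rightarrow> real"
  assumes "\<And>n. 0 \<le> x n" "summable x"
  shows "summable (\<lambda>n. (if \<epsilon> n then 1 else 0) * x n)"
  by (rule summable_comparison_test'[where g = x]) (use assms in auto)

lemma sums_fun_upd:
  fixes f :: "nat \<Rightarrow> 'a::real_normed_vector"
  assumes "f sums s"
  shows "f(n := c) sums (s - f n + c)"
proof -
  have "(\<lambda>i. f i + (if i = n then c - f n else 0)) sums (s + (c - f n))"
    by (intro sums_add assms sums_single)
  moreover have "(\<lambda>i. f i + (if i = n then c - f n else 0)) = f(n := c)"
    by auto
  ultimately show ?thesis
    by (simp add: algebra_simps)
qed

lemma summable_fun_upd:
  fixes f :: "nat \<Rightarrow> 'a::real_normed_vector"
  shows "summable f \<Longrightarrow> summable (f(n := c))"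
  using sums_fun_upd summable_def by blast

lemma suminf_fun_upd:
  fixes f :: "nat \<Rightarrow> 'a::real_normed_vector"
  shows "summable f \<Longrightarrow> suminf (f(n := c)) = suminf f - f n + c"
  using sums_fun_upd sums_unique summable_sums by metis

lemma subseries_sum_upd_selection:
  fixes x :: "nat \<Rightarrow> real"
  assumes "\<And>n. 0 \<le> x n" "summable x"
  shows "subseries_sum x (\<epsilon>(n := b)) =
    subseries_sum x \<epsilon> - (if \<epsilon> n then 1 else 0) * x n + (if b then 1 else 0) * x n"
proof -
  let ?f = "\<lambda>i. (if \<epsilon> i then 1 else 0) * x i"
  have "(\<lambda>i. (if (\<epsilon>(n := b)) i then 1 else 0) * x i) = ?f(n := (if b then 1 else 0) * x n)"
    by auto
  then show ?thesis
    unfolding subseries_sum_def using suminf_fun_upd[OF summable_subseries[OF assms]] by simp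
qed

lemma subseries_sum_upd_zero:
  fixes x :: "nat \<Rightarrow> real"
  assumes "\<And>n. 0 \<le> x n" "summable x"
  shows "subseries_sum (x(n := 0)) \<epsilon> = subseries_sum x \<epsilon> - (if \<epsilon> n then 1 else 0) * x n"
proof -
  let ?f = "\<lambda>i. (if \<epsilon> i then 1 else 0) * x i"
  have "(\<lambda>i. (if \<epsilon> i then 1 else 0) * (x(n := 0)) i) = ?f(n := 0)"
    by auto
  then show ?thesis
    unfolding subseries_sum_def using suminf_fun_upd[OF summable_subseries[OF assms]] by simp
qed

lemma subseries_sum_split_pair:
  fixes x :: "nat \<Rightarrow> real"
  assumes nonneg: "\<And>n. 0 \<le> x n" and summable: "summable x" and "i \<noteq> j"
  shows "subseries_sum x \<epsilon> = subseries_sum (x(i := 0, j := 0)) \<epsilon>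
    + (if \<epsilon> i then 1 else 0) * x i + (if \<epsilon> j then 1 else 0) * x j"
proof -
  have "\<And>n. 0 \<le> (x(i := 0)) n" "summable (x(i := 0))"
    using nonneg summable_fun_upd[OF summable] by auto
  from subseries_sum_upd_zero[OF this, of j] subseries_sum_upd_zero[OF nonneg summable, of i]
  show ?thesis
    using \<open>i \<noteq> j\<close> by simp
qed

lemma compact_UNIV_nat_bool_fun: "compact (UNIV :: (nat \<Rightarrow> bool) set)"
proof -
  have "compact_space (product_topology (\<lambda>_. euclidean :: bool topology) UNIV)"
    by (rule iffD2[OF compact_space_product_topology])
      (simp add: compact_space_def finite_imp_compact)
  then have "compact_space (euclidean :: (nat \<Rightarrow> bool) topology)"
    by (simp only: euclidean_product_topology)
  then show ?thesis
    by (simp add: compact_space_def)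
qed

lemma continuous_on_subseries_sum:
  fixes x :: "nat \<Rightarrow> real"
  assumes "\<And>n. 0 \<le> x n" "summable x"
  shows "continuous_on UNIV (subseries_sum x)"
proof -
  have "uniform_limit UNIV (\<lambda>N \<epsilon>. \<Sum>i<N. (if \<epsilon> i then 1 else 0) * x i)
      (subseries_sum x) sequentially"
    unfolding subseries_sum_def by (rule Weierstrass_m_test[where M = x]) (use assms in auto)
  moreover have "continuous_on UNIV (\<lambda>\<epsilon> :: nat \<Rightarrow> bool. (if \<epsilon> i then 1 else 0) * x i)" for i
  proof -
    have "continuous_on UNIV (\<lambda>b :: bool. (if b then 1 else 0) * x i)"
      by (simp add: continuous_on_discrete)
    from continuous_on_compose2[OF this continuous_on_product_coordinates] show ?thesis
      by simp
  qed
  ultimately show ?thesis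
    by (intro uniform_limit_theorem) (auto intro!: always_eventually continuous_on_sum)
qed

lemma compact_achievement_set:
  fixes x :: "nat \<Rightarrow> real"
  assumes "\<And>n. 0 \<le> x n" "summable x"
  shows "compact (achievement_set x)"
  unfolding achievement_set_eq_range
  using compact_continuous_image[OF continuous_on_subseries_sum[OF assms] compact_UNIV_nat_bool_fun] .

lemma achievement_set_islimpt:
  fixes x :: "nat \<Rightarrow> real"
  assumes pos: "\<And>n. 0 < x n" and summable: "summable x" and t: "t \<in> achievement_set x"
  shows "t islimpt achievement_set x"
  unfolding islimpt_approachable_real
proof (intro allI impI)
  fix r :: real
  assume "0 < r"
  obtain \<epsilon> where \<epsilon>: "t = subseries_sum x \<epsilon>"
    using t by (auto simp: achievement_set_eq_range)
  obtain n where n: "x n < r"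
    using order_tendstoD(2)[OF summable_LIMSEQ_zero[OF summable] \<open>0 < r\<close>]
    by (auto simp: eventually_sequentially)
  have "subseries_sum x (\<epsilon>(n := \<not> \<epsilon> n)) = t + (if \<epsilon> n then - x n else x n)"
    using subseries_sum_upd_selection[of x, OF less_imp_le[OF pos] summable] \<epsilon> by simp
  moreover have "subseries_sum x (\<epsilon>(n := \<not> \<epsilon> n)) \<in> achievement_set x"
    by (simp add: achievement_set_eq_range)
  ultimately show "\<exists>t'\<in>achievement_set x. t' \<noteq> t \<and> \<bar>t' - t\<bar> < r"
    using n pos[of n] by (intro bexI[of _ "subseries_sum x (\<epsilon>(n := \<not> \<epsilon> n))"]) auto
qed

lemma interior_achievement_set_nonempty:
  fixes x :: "nat \<Rightarrow> real"
  assumes "\<And>n. 0 < x n" "summable x" "\<not> cantor_set (achievement_set x)"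
  shows "interior (achievement_set x) \<noteq> {}"
proof -
  have "\<And>n. 0 \<le> x n"
    using assms(1) less_imp_le by blast
  then have "compact (achievement_set x)"
    using compact_achievement_set assms(2) by blast
  moreover have "achievement_set x \<noteq> {}"
    by (simp add: achievement_set_eq_range)
  moreover have "\<forall>t\<in>achievement_set x. t islimpt achievement_set x"
    using achievement_set_islimpt assms(1,2) by blast
  ultimately have "interior (closure (achievement_set x)) \<noteq> {}"
    using assms(3) unfolding cantor_set_def by blast
  then show ?thesis
    using \<open>compact (achievement_set x)\<close> compact_imp_closed closure_closed by metis
qed

lemma interior_Union_translations_empty:
  fixes B :: "'a::real_normed_vector set"
  assumes "finite C" "closed B" "interior B = {}"
  shows "interior (\<Union>c\<in>C. (+) c ` B) = {}"
  using assms(1)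
proof (induction C rule: finite_induct)
  case (insert c C)
  have "interior ((+) c ` B \<union> (\<Union>c\<in>C. (+) c ` B)) = interior ((+) c ` B)"
    by (rule interior_closed_Un_empty_interior[OF closed_translation[OF assms(2)] insert.IH])
  then show ?case
    by (simp add: interior_translation assms(3))
qed simp

lemma connected_subset_disjoint_Union_closed:
  assumes "connected S" "S \<noteq> {}" "finite \<C>" "\<And>C. C \<in> \<C> \<Longrightarrow> closed C"
    and "pairwise disjnt \<C>" "S \<subseteq> \<Union>\<C>"
  obtains C where "C \<in> \<C>" "S \<subseteq> C"
proof -
  obtain C where C: "C \<in> \<C>" "S \<inter> C \<noteq> {}"
    using assms(2,6) by blast
  let ?R = "\<Union>(\<C> - {C})"
  have "closed ?R"
    using assms(3,4) by auto
  moreover have "C \<inter> ?R = {}"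
    using C(1) assms(5) by (auto simp: pairwise_def disjnt_def)
  moreover have "S \<subseteq> C \<union> ?R"
    using assms(6) by blast
  ultimately have "S \<inter> ?R = {}"
    using connected_closed[THEN iffD1, OF assms(1)] assms(4)[OF C(1)] C(2) by blast
  then show ?thesis
    using that C(1) \<open>S \<subseteq> C \<union> ?R\<close> by blast
qed

lemma suminf_tail_tendsto_zero:
  fixes f :: "nat \<Rightarrow> real"
  assumes "summable f"
  shows "(\<lambda>N. \<Sum>n. f (n + N)) \<longlonglongrightarrow> 0"
proof -
  have "(\<lambda>N. suminf f - (\<Sum>n<N. f n)) \<longlonglongrightarrow> suminf f - suminf f"
    by (intro tendsto_intros summable_LIMSEQ assms)
  then show ?thesis
    using suminf_minus_initial_segment[OF assms] by simp
qed

definition fix_prefix :: "nat \<Rightarrow> nat set \<Rightarrow> (nat \<Rightarrow> bool) \<Rightarrow> nat \<Rightarrow> bool" where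
  "fix_prefix N F \<epsilon> n = (if n < N then n \<in> F else \<epsilon> n)"

lemma continuous_on_fix_prefix: "continuous_on UNIV (fix_prefix N F)"
proof (rule continuous_on_coordinatewise_then_product)
  fix n
  show "continuous_on UNIV (\<lambda>\<epsilon>. fix_prefix N F \<epsilon> n)"
    by (cases "n < N") (simp_all add: fix_prefix_def continuous_on_product_coordinates)
qed

lemma subseries_sum_fix_prefix_bounds:
  fixes z :: "nat \<Rightarrow> real"
  assumes nonneg: "\<And>n. 0 \<le> z n" and summable: "summable z" and "F \<subseteq> {..<N}"
  shows "(\<Sum>n\<in>F. z n) \<le> subseries_sum z (fix_prefix N F \<epsilon>)"
    and "subseries_sum z (fix_prefix N F \<epsilon>) \<le> (\<Sum>n\<in>F. z n) + (\<Sum>n. z (n + N))"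
proof -
  let ?f = "\<lambda>n. (if fix_prefix N F \<epsilon> n then 1 else 0) * z n"
  have "summable ?f"
    by (rule summable_subseries[OF nonneg summable])
  then have tail_summable: "summable (\<lambda>n. ?f (n + N))"
    by (rule summable_ignore_initial_segment)
  have "(\<Sum>n<N. ?f n) = (\<Sum>n<N. if n \<in> F then z n else 0)"
    by (rule sum.cong) (auto simp: fix_prefix_def)
  also have "\<dots> = (\<Sum>n\<in>F. z n)"
    using \<open>F \<subseteq> {..<N}\<close> by (simp add: sum.inter_restrict[symmetric] Int_absorb1)
  finally have split: "subseries_sum z (fix_prefix N F \<epsilon>) = (\<Sum>n. ?f (n + N)) + (\<Sum>n\<in>F. z n)"
    unfolding subseries_sum_def using suminf_split_initial_segment[OF \<open>summable ?f\<close>, of N] by simp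
  have "0 \<le> (\<Sum>n. ?f (n + N))"
    using tail_summable nonneg by (intro suminf_nonneg) auto
  moreover have "(\<Sum>n. ?f (n + N)) \<le> (\<Sum>n. z (n + N))"
    using tail_summable summable_ignore_initial_segment[OF summable] nonneg
    by (intro suminf_le) auto
  ultimately show "(\<Sum>n\<in>F. z n) \<le> subseries_sum z (fix_prefix N F \<epsilon>)"
    and "subseries_sum z (fix_prefix N F \<epsilon>) \<le> (\<Sum>n\<in>F. z n) + (\<Sum>n. z (n + N))"
    using split by linarith+
qed

lemma fix_prefix_eq_if_unique_representation:
  fixes z :: "nat \<Rightarrow> real"
  assumes unique: "inj_on (subseries_sum z) {\<epsilon>. \<forall>n. \<epsilon> n \<longrightarrow> z n \<noteq> 0}"
    and F: "F \<subseteq> {..<N} \<inter> {n. z n \<noteq> 0}" and G: "G \<subseteq> {..<N} \<inter> {n. z n \<noteq> 0}"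
    and eq: "subseries_sum z (fix_prefix N F \<epsilon>) = subseries_sum z (fix_prefix N G \<delta>)"
  shows "F = G"
proof -
  define restrict where "restrict \<gamma> n = (\<gamma> n \<and> z n \<noteq> 0)" for \<gamma> :: "nat \<Rightarrow> bool" and n
  have "subseries_sum z (restrict \<gamma>) = subseries_sum z \<gamma>" for \<gamma>
    by (rule subseries_sum_cong) (simp add: restrict_def)
  then have restricted_eq: "restrict (fix_prefix N F \<epsilon>) = restrict (fix_prefix N G \<delta>)"
    using eq by (intro inj_onD[OF unique]) (auto simp: restrict_def)
  have "n \<in> F \<longleftrightarrow> n \<in> G" if "n < N" "z n \<noteq> 0" for n
    using fun_cong[OF restricted_eq, of n] that by (simp add: restrict_def fix_prefix_def)
  then show ?thesis
    using F G by blast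
qed

lemma interior_achievement_set_empty_if_unique_representation:
  fixes z :: "nat \<Rightarrow> real"
  assumes nonneg: "\<And>n. 0 \<le> z n" and summable: "summable z"
    and unique: "inj_on (subseries_sum z) {\<epsilon>. \<forall>n. \<epsilon> n \<longrightarrow> z n \<noteq> 0}"
  shows "interior (achievement_set z) = {}"
proof (rule ccontr)
  assume "interior (achievement_set z) \<noteq> {}"
  then obtain t r where "0 < r" and ball: "ball t r \<subseteq> achievement_set z"
    by (meson all_not_in_conv mem_interior)
  moreover have "{t - r/2 .. t + r/2} \<subseteq> ball t r"
    using \<open>0 < r\<close> by (auto simp: dist_real_def)
  ultimately obtain a b where "a < b" and ab: "{a..b} \<subseteq> achievement_set z"
    by (intro that[of "t - r/2" "t + r/2"]) auto
  obtain N where tail: "(\<Sum>n. z (n + N)) < b - a"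
    using order_tendstoD(2)[OF suminf_tail_tendsto_zero[OF summable], of "b - a"] \<open>a < b\<close>
    by (auto simp: eventually_sequentially)
  define piece where "piece F = range (\<lambda>\<epsilon>. subseries_sum z (fix_prefix N F \<epsilon>))" for F
  define \<F> where "\<F> = Pow ({..<N} \<inter> {n. z n \<noteq> 0})"
  have closed: "closed C" if "C \<in> piece ` \<F>" for C
  proof -
    have "continuous_on UNIV (\<lambda>\<epsilon>. subseries_sum z (fix_prefix N F \<epsilon>))" for F
      using continuous_on_compose2[OF continuous_on_subseries_sum[OF nonneg summable]
          continuous_on_fix_prefix] by blast
    then show ?thesis
      using that unfolding piece_def
      by (auto intro!: compact_imp_closed compact_continuous_image compact_UNIV_nat_bool_fun)
  qed
  have disjoint: "pairwise disjnt (piece ` \<F>)"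
  proof (rule pairwise_imageI)
    fix F G
    assume "F \<in> \<F>" "G \<in> \<F>" "F \<noteq> G"
    then show "disjnt (piece F) (piece G)"
      using fix_prefix_eq_if_unique_representation[OF unique, of F N G]
      unfolding disjnt_def piece_def \<F>_def by blast
  qed
  have cover: "{a..b} \<subseteq> \<Union>(piece ` \<F>)"
  proof
    fix u
    assume "u \<in> {a..b}"
    then obtain \<epsilon> where u: "u = subseries_sum z \<epsilon>"
      using ab by (auto simp: achievement_set_eq_range)
    define F where "F = {n. n < N \<and> \<epsilon> n \<and> z n \<noteq> 0}"
    have "u = subseries_sum z (fix_prefix N F \<epsilon>)"
      unfolding u by (rule subseries_sum_cong) (simp add: F_def fix_prefix_def)
    moreover have "F \<in> \<F>"
      by (auto simp: F_def \<F>_def)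
    ultimately show "u \<in> \<Union>(piece ` \<F>)"
      unfolding piece_def by blast
  qed
  have "finite (piece ` \<F>)"
    by (simp add: \<F>_def)
  then obtain C where "C \<in> piece ` \<F>" "{a..b} \<subseteq> C"
    using connected_subset_disjoint_Union_closed[OF connected_Icc _ _ closed disjoint cover] \<open>a < b\<close>
    by auto
  then obtain F where "F \<in> \<F>" "{a..b} \<subseteq> piece F"
    by blast
  then have "a \<in> piece F" "b \<in> piece F"
    using \<open>a < b\<close> by auto
  then obtain \<epsilon> \<delta>
    where "a = subseries_sum z (fix_prefix N F \<epsilon>)" "b = subseries_sum z (fix_prefix N F \<delta>)"
    unfolding piece_def by blast
  moreover have "F \<subseteq> {..<N}"
    using \<open>F \<in> \<F>\<close> by (auto simp: \<F>_def)
  ultimately have "b - a \<le> (\<Sum>n. z (n + N))"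
    using subseries_sum_fix_prefix_bounds(1)[OF nonneg summable, of F N \<epsilon>]
      subseries_sum_fix_prefix_bounds(2)[OF nonneg summable, of F N \<delta>] by linarith
  with tail show False
    by simp
qed

lemma four_representations:
  fixes x :: "nat \<Rightarrow> real" and k :: nat
  defines "z \<equiv> x(k := 0, Suc k := 0)"
  assumes nonneg: "\<And>n. 0 \<le> x n" and summable: "summable x" and twin: "x k = x (Suc k)"
    and "\<epsilon> \<noteq> \<delta>" "\<not> \<epsilon> k" "\<not> \<epsilon> (Suc k)" "\<not> \<delta> k" "\<not> \<delta> (Suc k)"
    and eq: "subseries_sum z \<epsilon> = subseries_sum z \<delta>"
  shows "\<exists>t\<in>achievement_set x. infinite (representations x t) \<or> card (representations x t) \<ge> 4"
proof -
  define t where "t = subseries_sum z \<epsilon> + x k"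
  have rep: "subseries_sum x (\<gamma>(j := True)) = t"
    if "j \<in> {k, Suc k}" "\<not> \<gamma> k" "\<not> \<gamma> (Suc k)"
      and "subseries_sum z \<gamma> = subseries_sum z \<epsilon>" for \<gamma> j
  proof -
    have "subseries_sum z (\<gamma>(j := True)) = subseries_sum z \<gamma>"
      by (rule subseries_sum_cong) (use that in \<open>auto simp: z_def\<close>)
    then show ?thesis
      using subseries_sum_split_pair[OF nonneg summable, of k "Suc k" "\<gamma>(j := True)"] that twin
      by (auto simp: t_def z_def)
  qed
  let ?R = "{\<epsilon>(k := True), \<epsilon>(Suc k := True), \<delta>(k := True), \<delta>(Suc k := True)}"
  have R_representations: "?R \<subseteq> representations x t"
    using rep assms(5-) by (auto simp: representations_eq)
  obtain n where "\<epsilon> n \<noteq> \<delta> n"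
    using \<open>\<epsilon> \<noteq> \<delta>\<close> by blast
  moreover have "n \<noteq> k" "n \<noteq> Suc k"
    using \<open>\<epsilon> n \<noteq> \<delta> n\<close> assms(6-9) by auto
  ultimately have "\<epsilon>(k := True) \<noteq> \<delta>(k := True)" "\<epsilon>(Suc k := True) \<noteq> \<delta>(Suc k := True)"
    by (metis fun_upd_other)+
  moreover have "\<epsilon>(k := True) \<noteq> \<epsilon>(Suc k := True)" "\<delta>(k := True) \<noteq> \<delta>(Suc k := True)"
    "\<epsilon>(k := True) \<noteq> \<delta>(Suc k := True)" "\<epsilon>(Suc k := True) \<noteq> \<delta>(k := True)"
    using assms(6-9) by (metis fun_upd_same fun_upd_other n_not_Suc_n)+
  ultimately have "card ?R = 4"
    by simp
  moreover have "t \<in> achievement_set x"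
    using rep[of k \<epsilon>] assms(6,7) by (auto simp: achievement_set_eq_range)
  ultimately show ?thesis
    using R_representations card_mono by metis
qed

theorem proposition2p2:
  fixes x :: "nat \<Rightarrow> real"
  assumes pos: "\<And>n. x n > 0"
    and summ: "summable x"
    and noninc: "\<And>n. x (Suc n) \<le> x n"
    and not_cantor: "\<not> cantor_set (achievement_set x)"
    and not_finite: "\<not> finite (achievement_set x)"
    and eq: "\<exists>k. x k = x (Suc k)"
  shows "\<exists>t \<in> achievement_set x.
           infinite (representations x t) \<or> card (representations x t) \<ge> 4"
proof -
  obtain k where twin: "x k = x (Suc k)"
    using eq by blast
  define z where "z = x(k := 0, Suc k := 0)"
  have nonneg: "\<And>n. 0 \<le> x n"
    using pos less_imp_le by blast
  have z_nonneg: "\<And>n. 0 \<le> z n" and z_summable: "summable z"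
    using nonneg summable_fun_upd[OF summable_fun_upd[OF summ]] by (auto simp: z_def)
  have "achievement_set x \<subseteq> (\<Union>c\<in>{0, x k, 2 * x k}. (+) c ` achievement_set z)"
    using subseries_sum_split_pair[OF nonneg summ, of k "Suc k"] twin
    by (fastforce simp: achievement_set_eq_range z_def)
  then have "interior (achievement_set z) \<noteq> {}"
    using interior_achievement_set_nonempty[OF pos summ not_cantor] interior_mono
      interior_Union_translations_empty[of "{0, x k, 2 * x k}"]
      compact_imp_closed[OF compact_achievement_set[OF z_nonneg z_summable]]
    by blast
  then obtain \<epsilon> \<delta> where "\<epsilon> \<noteq> \<delta>" and eq: "subseries_sum z \<epsilon> = subseries_sum z \<delta>"
    and "\<forall>n. \<epsilon> n \<longrightarrow> z n \<noteq> 0" "\<forall>n. \<delta> n \<longrightarrow> z n \<noteq> 0"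
    using interior_achievement_set_empty_if_unique_representation[OF z_nonneg z_summable]
    unfolding inj_on_def by blast
  moreover have "z k = 0" "z (Suc k) = 0"
    by (simp_all add: z_def)
  ultimately show ?thesis
    using four_representations[OF nonneg summ twin \<open>\<epsilon> \<noteq> \<delta>\<close>] eq unfolding z_def by blast
qed

end
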